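(* Let $n$ be a positive integer, and suppose there exists a hexagonal permutation $\pi$ with $n$ dots. Then $n$ is odd, and the dots of $\pi$ are contained in a Lee sphere of radius $(n-1)/2$.
   Context: Model the cells (hexagons) of the hexagonal grid by $\mathbb{Z}^2$, where cell $(x,y)$ is adjacent to the six cells $(x\pm1,y)$, $(x,y\pm1)$, $(x+1,y+1)$, $(x-1,y-1)$. The "rows" of the hexagonal grid in its three natural directions are the sets $\{y=c\}$, $\{x=c\}$ and $\{x-y=c\}$ for $c\in\mathbb{Z}$; two rows of the same direction are consecutive if their constants $c$ differ by $1$. A set of dots is a finite nonempty set of cells. A hexagonal permutation with $n$ dots is a set $\pi$ of $n$ cells such that, for each of the three directions, the rows of that direction containing a dot of $\pi$ are exactly $n$ consecutive rows, and each of these rows contains exactly one dot of $\pi$. The distance between two cells is the length of a shortest path of successively adjacent cells joining them; for cells $(x,y)$ and $(a,b)$ it equals $\max(|x-a|,|y-b|,|(x-a)-(y-b)|)$. A Lee sphere of radius $r$ with centre $(a,b)$ is the set of all cells at distance at most $r$ from $(a,b)$. *)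

theory Defs
  imports Main
begin

type_synonym cell = "int \<times> int"

definition row_y :: "cell \<Rightarrow> int" where "row_y p = snd p"
definition row_x :: "cell \<Rightarrow> int" where "row_x p = fst p"
definition row_d :: "cell \<Rightarrow> int" where "row_d p = fst p - snd p"

definition rows_ok :: "(cell \<Rightarrow> int) \<Rightarrow> cell set \<Rightarrow> nat \<Rightarrow> bool" where
  "rows_ok r P n \<longleftrightarrow>
     (\<exists>c. r ` P = {c .. c + int n - 1}) \<and>
     (\<forall>k \<in> r ` P. card {p \<in> P. r p = k} = 1)"

definition hex_perm :: "cell set \<Rightarrow> nat \<Rightarrow> bool" where
  "hex_perm P n \<longleftrightarrow> finite P \<and> card P = n \<and>
     rows_ok row_y P n \<and> rows_ok row_x P n \<and> rows_ok row_d P n"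

definition hex_dist :: "cell \<Rightarrow> cell \<Rightarrow> int" where
  "hex_dist p q = max \<bar>fst p - fst q\<bar> (max \<bar>snd p - snd q\<bar> \<bar>(fst p - fst q) - (snd p - snd q)\<bar>)"

definition lee_sphere :: "int \<Rightarrow> cell \<Rightarrow> cell set" where
  "lee_sphere r c = {p. hex_dist p c \<le> r}"

end

theory Submission
  imports Defs
begin

text \<open>Summing the three row indices over the dots: with first rows a, b, d for the directions
  x, y, x - y, each index runs once through n consecutive integers, and row_d = row_x - row_y
  gives n(2d + n - 1) = n(2a + n - 1) - n(2b + n - 1), i.e. n - 1 = 2(a - b - d).  Hence n is odd,
  and with m = (n - 1)/2 the dots lie in the three bands of width 2m whose intersection is the
  Lee sphere of radius m about (a + m, b + m).\<close>

lemma two_sum_int_interval: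
  "2 * \<Sum>{c .. c + int n - 1} = int n * (2 * c + int n - 1)"
proof (induction n)
  case (Suc n)
  have "{c .. c + int (Suc n) - 1} = insert (c + int n) {c .. c + int n - 1}"
    by auto
  then show ?case using Suc by (simp add: algebra_simps)
qed simp

lemma rows_ok_inj_on:
  assumes "rows_ok r P n"
  shows "inj_on r P"
proof (rule inj_onI)
  fix p q assume "p \<in> P" "q \<in> P" "r p = r q"
  moreover from assms \<open>p \<in> P\<close> have "card {p' \<in> P. r p' = r p} = 1"
    unfolding rows_ok_def by blast
  ultimately show "p = q"
    by (metis (mono_tags, lifting) card_1_singletonE mem_Collect_eq singletonD)
qed

lemma two_sum_rows_ok:
  assumes "rows_ok r P n"
  obtains c where "r ` P = {c .. c + int n - 1}" and "2 * sum r P = int n * (2 * c + int n - 1)"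
proof -
  from assms obtain c where c: "r ` P = {c .. c + int n - 1}"
    unfolding rows_ok_def by blast
  have "sum r P = \<Sum>(r ` P)"
    using sum.reindex[OF rows_ok_inj_on[OF assms], of id] by simp
  with c two_sum_int_interval show thesis
    by (intro that) auto
qed

lemma hex_dist_le_of_bands:
  assumes "a \<le> fst p" "fst p \<le> a + 2 * m" "b \<le> snd p" "snd p \<le> b + 2 * m"
    and "a - b - m \<le> fst p - snd p" "fst p - snd p \<le> a - b + m"
  shows "p \<in> lee_sphere m (a + m, b + m)"
  using assms unfolding lee_sphere_def hex_dist_def by (simp add: abs_le_iff)

theorem theorem1:
  fixes n :: nat and P :: "cell set"
  assumes "n > 0" and "hex_perm P n"
  shows "odd n \<and> (\<exists>c. P \<subseteq> lee_sphere ((int n - 1) div 2) c)"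
proof -
  from assms(2) have rows: "rows_ok row_x P n" "rows_ok row_y P n" "rows_ok row_d P n"
    unfolding hex_perm_def by auto
  obtain a where a: "row_x ` P = {a .. a + int n - 1}" "2 * sum row_x P = int n * (2 * a + int n - 1)"
    using two_sum_rows_ok[OF rows(1)] .
  obtain b where b: "row_y ` P = {b .. b + int n - 1}" "2 * sum row_y P = int n * (2 * b + int n - 1)"
    using two_sum_rows_ok[OF rows(2)] .
  obtain d where d: "row_d ` P = {d .. d + int n - 1}" "2 * sum row_d P = int n * (2 * d + int n - 1)"
    using two_sum_rows_ok[OF rows(3)] .
  define m where "m = a - b - d"
  have "sum row_d P = sum row_x P - sum row_y P"
    unfolding row_d_def row_x_def row_y_def by (simp add: sum_subtractf)
  with a(2) b(2) d(2) have "int n * (int n - 1 - 2 * m) = 0"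
    unfolding m_def by (simp add: algebra_simps)
  with assms(1) have n: "int n = 2 * m + 1"
    by simp
  have "P \<subseteq> lee_sphere m (a + m, b + m)"
  proof
    fix p assume "p \<in> P"
    then have "row_x p \<in> row_x ` P" "row_y p \<in> row_y ` P" "row_d p \<in> row_d ` P"
      by simp_all
    with a(1) b(1) d(1) n show "p \<in> lee_sphere m (a + m, b + m)"
      by (intro hex_dist_le_of_bands) (auto simp: row_x_def row_y_def row_d_def m_def)
  qed
  moreover from n have "odd n" "(int n - 1) div 2 = m"
    by presburger+
  ultimately show ?thesis
    by auto
qed

end
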